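(* Let $n\ge 3$ and consider the Markov chain on the state space $\{0,1,\dots,n-1\}$ with the $n\times n$ transition probability matrix $\mathbf P=(P_{ij})$ given by: $P_{00}=5/6$, $P_{01}=1/6$; $P_{10}=5/6$, $P_{12}=1/6$; for $2\le i\le n-2$: $P_{i0}=2/3$, $P_{i,i-1}=1/6$, $P_{i,i+1}=1/6$; $P_{n-1,0}=5/6$, $P_{n-1,n-2}=1/6$; and all other entries $0$. Then the steady state probability vector, i.e. the unique probability vector $\vec\pi=(\pi_0,\dots,\pi_{n-1})$ with $\vec\pi=\vec\pi\mathbf P$ and $\sum_i\pi_i=1$, is $$\vec\pi=\left(\frac{2B_n}{b_{n+1}},\frac{2B_{n-1}}{b_{n+1}},\dots,\frac{2B_1}{b_{n+1}}\right),$$ that is, $\pi_i=\dfrac{2B_{n-i}}{b_{n+1}}$ for $i=0,1,\dots,n-1$.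
   Context: The balancing numbers $B_m$ are defined by $B_0=0$, $B_1=1$, $B_{m+1}=6B_m-B_{m-1}$ (so $B_2=6$, $B_3=35,\dots$). The cobalancing numbers $b_m$ are defined by $b_0=0$, $b_1=0$, $b_{m+1}=6b_m-b_{m-1}+2$ (so $b_2=2$, $b_3=14,\dots$). *)

theory Defs
  imports Complex_Main
begin

fun bal :: "nat \<Rightarrow> int" where
  "bal 0 = 0"
| "bal (Suc 0) = 1"
| "bal (Suc (Suc m)) = 6 * bal (Suc m) - bal m"

fun cobal :: "nat \<Rightarrow> int" where
  "cobal 0 = 0"
| "cobal (Suc 0) = 0"
| "cobal (Suc (Suc m)) = 6 * cobal (Suc m) - cobal m + 2"

definition trans_P :: "nat \<Rightarrow> nat \<Rightarrow> nat \<Rightarrow> real" where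
  "trans_P n i j =
    (if i \<ge> n \<or> j \<ge> n then 0
     else if i = 0 then (if j = 0 then 5/6 else if j = 1 then 1/6 else 0)
     else if i = 1 then (if j = 0 then 5/6 else if j = 2 then 1/6 else 0)
     else if i = n - 1 then (if j = 0 then 5/6 else if j = n - 2 then 1/6 else 0)
     else (if j = 0 then 2/3 else if j = i - 1 then 1/6 else if j = i + 1 then 1/6 else 0))"

definition stationary_prob :: "nat \<Rightarrow> (nat \<Rightarrow> real) \<Rightarrow> bool" where
  "stationary_prob n \<pi> \<longleftrightarrow>
     (\<forall>i<n. \<pi> i \<ge> 0) \<and> (\<Sum>i<n. \<pi> i) = 1 \<and>
     (\<forall>j<n. \<pi> j = (\<Sum>i<n. \<pi> i * trans_P n i j))"

end

theory Submission
  imports Defs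
begin

text \<open>
  For \<open>j \<ge> 1\<close> the only nonzero entries of column \<open>j\<close> are \<open>P(j-1,j) = P(j+1,j) = 1/6\<close>, so the
  balance equation at \<open>j\<close> reads \<open>\<pi>(j-1) = 6 \<pi>(j) - \<pi>(j+1)\<close>, with \<open>\<pi>(n) = 0\<close>. Read from the
  right end this is the recurrence of the balancing numbers, hence \<open>\<pi>(i) = B(n-i) \<pi>(n-1)\<close>, and
  conversely every such vector satisfies these equations. The equation at column 0 then holds
  automatically because \<open>P\<close> is stochastic, and \<open>2 (B(1) + \<dots> + B(n)) = b(n+1)\<close> turns the
  normalisation into \<open>\<pi>(n-1) = 2 / b(n+1)\<close>.
\<close>

lemma balance_at_remaining_state:
  fixes P :: "nat \<Rightarrow> nat \<Rightarrow> 'a::comm_ring_1"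
  assumes stochastic: "\<And>i. i < n \<Longrightarrow> (\<Sum>j<n. P i j) = 1"
    and balance: "\<And>j. j < n \<Longrightarrow> j \<noteq> k \<Longrightarrow> \<pi> j = (\<Sum>i<n. \<pi> i * P i j)"
    and "k < n"
  shows "\<pi> k = (\<Sum>i<n. \<pi> i * P i k)"
proof -
  have "(\<Sum>j<n. \<Sum>i<n. \<pi> i * P i j) = (\<Sum>i<n. \<pi> i * (\<Sum>j<n. P i j))"
    by (subst sum.swap) (simp add: sum_distrib_left)
  also have "\<dots> = (\<Sum>j<n. \<pi> j)"
    using stochastic by simp
  finally have total: "(\<Sum>j<n. \<Sum>i<n. \<pi> i * P i j) = (\<Sum>j<n. \<pi> j)" .
  have "(\<Sum>j\<in>{..<n} - {k}. \<Sum>i<n. \<pi> i * P i j) = (\<Sum>j\<in>{..<n} - {k}. \<pi> j)"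
    using balance by (intro sum.cong) auto
  with total \<open>k < n\<close> show ?thesis
    by (simp add: sum.remove[of "{..<n}" k])
qed

lemma trans_P_row_sum:
  assumes "3 \<le> n" "i < n"
  shows "(\<Sum>j<n. trans_P n i j) = 1"
  using assms unfolding trans_P_def by (auto simp: sum.If_cases)

lemma trans_P_column:
  assumes "1 \<le> j" "j < n" "i < n"
  shows "trans_P n i j = (if i = j - 1 then 1/6 else 0) + (if i = j + 1 then 1/6 else 0)"
proof -
  consider "i = 0" | "i = 1" | "2 \<le> i" "i = n - 1" | "2 \<le> i" "i \<noteq> n - 1"
    by linarith
  then show ?thesis
    by cases (use assms in \<open>auto simp: trans_P_def\<close>)
qed

lemma trans_P_column_sum:
  fixes \<pi> :: "nat \<Rightarrow> real"
  assumes "1 \<le> j" "j < n"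
  shows "(\<Sum>i<n. \<pi> i * trans_P n i j) = (\<pi> (j - 1) + (if j + 1 < n then \<pi> (j + 1) else 0)) / 6"
proof -
  have "(\<Sum>i<n. \<pi> i * trans_P n i j) =
      (\<Sum>i<n. (if i = j - 1 then \<pi> (j - 1) / 6 else 0) + (if i = j + 1 then \<pi> (j + 1) / 6 else 0))"
    using assms by (intro sum.cong) (auto simp: trans_P_column)
  also have "\<dots> = (\<pi> (j - 1) + (if j + 1 < n then \<pi> (j + 1) else 0)) / 6"
    using assms by (auto simp: sum.distrib sum.delta)
  finally show ?thesis .
qed

lemma bal_nonneg_mono: "0 \<le> bal m \<and> bal m \<le> bal (Suc m)"
  by (induction m rule: bal.induct) auto

lemma cobal_Suc_diff: "cobal (Suc m) - cobal m = 2 * bal m"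
  by (induction m rule: bal.induct) auto

lemma sum_bal_atMost: "2 * (\<Sum>k\<le>m. bal k) = cobal (Suc m)"
  by (induction m) (use cobal_Suc_diff in \<open>auto simp: algebra_simps\<close>)

lemma cobal_pos: "0 < cobal (Suc (Suc m))"
proof -
  have "bal 1 \<le> (\<Sum>k\<le>Suc m. bal k)"
    using bal_nonneg_mono by (intro member_le_sum) auto
  then show ?thesis
    using sum_bal_atMost[of "Suc m"] by simp
qed

lemma sum_bal_rev: "2 * (\<Sum>i<n. of_int (bal (n - i))) = (of_int (cobal (Suc n)) :: 'a::comm_ring_1)"
proof -
  have "(\<Sum>i<n. bal (n - i)) = (\<Sum>k<n. bal (Suc k))"
    using sum.nat_diff_reindex[of "\<lambda>k. bal (Suc k)" n] by (simp add: Suc_diff_Suc)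
  also have "\<dots> = (\<Sum>k\<le>n. bal k)"
    by (simp add: sum.atMost_shift)
  finally have "2 * (\<Sum>i<n. bal (n - i)) = cobal (Suc n)"
    by (simp add: sum_bal_atMost)
  then show ?thesis
    by (metis of_int_mult of_int_numeral of_int_sum)
qed

lemma bal_recurrence_solution:
  fixes x :: "nat \<Rightarrow> 'a::comm_ring_1"
  assumes "x 0 = 0"
    and rec: "\<And>k. Suc (Suc k) \<le> N \<Longrightarrow> x (Suc (Suc k)) = 6 * x (Suc k) - x k"
    and "k \<le> N"
  shows "x k = of_int (bal k) * x 1"
  using \<open>k \<le> N\<close>
proof (induction k rule: bal.induct)
  case 1
  then show ?case using \<open>x 0 = 0\<close> by simp
next
  case 2
  then show ?case by simp
next
  case (3 m)
  then show ?case by (simp add: rec algebra_simps)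
qed

lemma balance_imp_proportional_bal:
  fixes \<pi> :: "nat \<Rightarrow> real"
  assumes balance: "\<And>j. 1 \<le> j \<Longrightarrow> j < n \<Longrightarrow> \<pi> j = (\<Sum>i<n. \<pi> i * trans_P n i j)"
    and "i < n"
  shows "\<pi> i = of_int (bal (n - i)) * \<pi> (n - 1)"
proof -
  define x where "x k = (if k = 0 then 0 else \<pi> (n - k))" for k
  have recurrence: "x (Suc (Suc k)) = 6 * x (Suc k) - x k" if "Suc (Suc k) \<le> n" for k
  proof -
    have "\<pi> (n - Suc k) = (\<pi> (n - Suc (Suc k)) + (if k = 0 then 0 else \<pi> (n - k))) / 6"
      using balance[of "n - Suc k"] trans_P_column_sum[of "n - Suc k" n \<pi>] that
      by (simp add: Suc_diff_Suc)
    then show ?thesis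
      unfolding x_def by simp
  qed
  have "x (n - i) = of_int (bal (n - i)) * x 1"
    using recurrence by (intro bal_recurrence_solution[where N = n]) (auto simp: x_def)
  with \<open>i < n\<close> show ?thesis
    by (simp add: x_def)
qed

lemma proportional_bal_imp_balance_column:
  fixes \<pi> :: "nat \<Rightarrow> real"
  assumes \<pi>: "\<And>i. i < n \<Longrightarrow> \<pi> i = c * of_int (bal (n - i))"
    and "1 \<le> j" "j < n"
  shows "\<pi> j = (\<Sum>i<n. \<pi> i * trans_P n i j)"
proof -
  obtain m where m: "n - j = Suc m"
    using \<open>j < n\<close> by (cases "n - j") auto
  have "n - (j - 1) = Suc (Suc m)"
    using m \<open>1 \<le> j\<close> by simp
  then have "\<pi> (j - 1) = c * of_int (bal (Suc (Suc m)))"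
    using \<pi>[of "j - 1"] \<open>j < n\<close> by (simp del: bal.simps)
  moreover have "\<pi> j = c * of_int (bal (Suc m))"
    using \<pi>[of j] m \<open>j < n\<close> by (simp del: bal.simps)
  moreover have "n - (j + 1) = m"
    using m by simp
  then have "(if j + 1 < n then \<pi> (j + 1) else 0) = c * of_int (bal m)"
    using \<pi>[of "j + 1"] by (cases m) auto
  ultimately show ?thesis
    unfolding trans_P_column_sum[OF \<open>1 \<le> j\<close> \<open>j < n\<close>] by (simp add: algebra_simps)
qed

lemma proportional_bal_imp_balance:
  fixes \<pi> :: "nat \<Rightarrow> real"
  assumes "3 \<le> n" and \<pi>: "\<And>i. i < n \<Longrightarrow> \<pi> i = c * of_int (bal (n - i))"
    and "j < n"
  shows "\<pi> j = (\<Sum>i<n. \<pi> i * trans_P n i j)"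
proof (cases j)
  case 0
  have "\<pi> 0 = (\<Sum>i<n. \<pi> i * trans_P n i 0)"
  proof (rule balance_at_remaining_state[where P = "trans_P n" and \<pi> = \<pi> and k = 0])
    show "(\<Sum>j<n. trans_P n i j) = 1" if "i < n" for i
      using \<open>3 \<le> n\<close> that by (rule trans_P_row_sum)
    show "\<pi> j = (\<Sum>i<n. \<pi> i * trans_P n i j)" if "j < n" "j \<noteq> 0" for j
      using \<pi> that by (intro proportional_bal_imp_balance_column) auto
  qed (use \<open>3 \<le> n\<close> in simp)
  with 0 show ?thesis
    by simp
next
  case (Suc m)
  with \<pi> \<open>j < n\<close> show ?thesis
    by (intro proportional_bal_imp_balance_column) auto
qed

lemma stationary_prob_imp_bal_formula:
  assumes "stationary_prob n \<pi>" "i < n"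
  shows "\<pi> i = 2 * real_of_int (bal (n - i)) / real_of_int (cobal (n + 1))"
proof -
  have balance: "\<forall>j<n. \<pi> j = (\<Sum>i<n. \<pi> i * trans_P n i j)" and "(\<Sum>i<n. \<pi> i) = 1"
    using assms(1) unfolding stationary_prob_def by blast+
  have \<pi>: "\<pi> i = of_int (bal (n - i)) * \<pi> (n - 1)" if "i < n" for i
    by (rule balance_imp_proportional_bal[OF _ that]) (use balance in blast)
  have "1 = (\<Sum>i<n. of_int (bal (n - i)) * \<pi> (n - 1))"
    unfolding \<open>(\<Sum>i<n. \<pi> i) = 1\<close>[symmetric] by (rule sum.cong[OF refl]) (rule \<pi>, simp)
  also have "\<dots> = real_of_int (cobal (n + 1)) / 2 * \<pi> (n - 1)"
    using sum_bal_rev[of n, where 'a = real] by (simp add: sum_distrib_right[symmetric])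
  finally have "real_of_int (cobal (n + 1)) * \<pi> (n - 1) = 2"
    by simp
  moreover have "0 < cobal (n + 1)"
    using cobal_pos[of "n - 1"] \<open>i < n\<close> by (simp add: Suc_diff_Suc)
  ultimately show ?thesis
    using \<pi>[OF \<open>i < n\<close>] by (simp add: field_simps)
qed

lemma bal_formula_imp_stationary_prob:
  assumes "3 \<le> n"
    and formula: "\<forall>i<n. \<pi> i = 2 * real_of_int (bal (n - i)) / real_of_int (cobal (n + 1))"
  shows "stationary_prob n \<pi>"
proof -
  define c where "c = 2 / real_of_int (cobal (n + 1))"
  have "n + 1 = Suc (Suc (n - 1))"
    using assms by simp
  then have "0 < c"
    unfolding c_def by (metis cobal_pos of_int_0_less_iff zero_less_divide_iff zero_less_numeral)
  have \<pi>: "\<pi> i = c * of_int (bal (n - i))" if "i < n" for i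
    using formula that by (simp add: c_def)
  have "(\<Sum>i<n. \<pi> i) = c * (\<Sum>i<n. of_int (bal (n - i)))"
    unfolding sum_distrib_left by (rule sum.cong) (simp_all add: \<pi>)
  also have "\<dots> = 1"
    using sum_bal_rev[of n, where 'a = real] \<open>0 < c\<close> by (simp add: c_def)
  finally have "(\<Sum>i<n. \<pi> i) = 1" .
  moreover have "0 \<le> \<pi> i" if "i < n" for i
    using \<pi>[OF that] \<open>0 < c\<close> bal_nonneg_mono by simp
  moreover have "\<pi> j = (\<Sum>i<n. \<pi> i * trans_P n i j)" if "j < n" for j
    using \<open>3 \<le> n\<close> \<pi> that by (rule proportional_bal_imp_balance)
  ultimately show ?thesis
    unfolding stationary_prob_def by blast
qed

theorem theorem2p1:
  fixes n :: nat
  assumes "n \<ge> 3"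
  shows "\<forall>\<pi> :: nat \<Rightarrow> real. stationary_prob n \<pi> \<longleftrightarrow>
           (\<forall>i<n. \<pi> i = 2 * real_of_int (bal (n - i)) / real_of_int (cobal (n + 1)))"
  using stationary_prob_imp_bal_formula bal_formula_imp_stationary_prob[OF assms] by blast

end
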